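(* Consider the non-stationary risk-aware bandit and UCB algorithm with parameter $\alpha$ described in the context, satisfying the stated assumption with constants $\theta>1$, $\xi>1$, $1/2\le\eta<1$, where $\xi$ is large enough that $\alpha>2$ satisfies $\xi\eta(1-\eta)\le\alpha<\xi(1-\eta)$. Let $\bar\rho_n=\frac1n\sum_{i=1}^K T_i(n)\hat\rho_{i,T_i(n)}$. Then 1. $|\mu^*-\mathbb{E}[\bar\rho_n]|=O\big(\exp(2\beta R)\,n^{\frac{\alpha}{\xi(1-\eta)}-1}\big)$, in particular $\lim_{n\to\infty}\mathbb{E}[\bar\rho_n]=\mu^*$; 2. there exist constants $\theta'>1$, $\xi'>1$ and $1/2\le\eta'<1$ such that for every $n\in\mathbb{N}$ and $z\ge1$, $$\mathbb{P}[n\bar\rho_n-n\mu^*\ge n^{\eta'}z]\le\frac{\theta'}{z^{\xi'}},\qquad \mathbb{P}[n\bar\rho_n-n\mu^*\le -n^{\eta'}z]\le\frac{\theta'}{z^{\xi'}},$$ where $\eta'=\frac{\alpha}{\xi(1-\eta)}$, $\xi'=\alpha-1$, and $\theta'$ depends on $R,K,\Delta_{\min},\beta,\theta,\xi,\alpha,\eta$.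
   Context: Bandit with $K$ arms; for each arm $i$ there is a sequence of random costs $(x_{i,t})_{t\ge1}$ with values in $[-R,R]$, $x_{i,t}$ being the cost at the $t$-th pull of arm $i$; the distributions may shift over time. Fix $\beta>0$ and let $\hat\rho_{i,n}=\frac1\beta\ln\big(\frac1n\sum_{t=1}^n\exp(\beta x_{i,t})\big)$ and $\mu_{i,n}=\mathbb{E}[\hat\rho_{i,n}]$. Assumption: for every arm $i$, $\lim_{n\to\infty}\mu_{i,n}=\mu_i$ exists, and there are constants $\theta>1$, $\xi>1$, $1/2\le\eta<1$ with $\mathbb{P}[n\hat\rho_{i,n}-n\mu_i\ge n^\eta z]\le\theta/z^\xi$ and $\mathbb{P}[n\hat\rho_{i,n}-n\mu_i\le -n^\eta z]\le\theta/z^\xi$ for all $z\ge1$, $n\in\mathbb{N}$. There is a unique arm $i^*$ attaining $\mu^*=\min_i\mu_i$; $\Delta_i=\mu_i-\mu^*$ and $\Delta_{\min}=\min_{i\ne i^*}\Delta_i$. Algorithm (with $\alpha>0$): pull each arm once, then at each timestep $t$ pull $a_t=\arg\min_i\{\hat\rho_{i,T_i(t-1)}-b_{t,T_i(t-1)}\}$ with $b_{t,s}=\theta^{1/\xi}t^{\alpha/\xi}/s^{1-\eta}$, where $T_i(n)$ is the number of times arm $i$ has been pulled during timesteps $1,\dots,n$. *)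

theory Defs
  imports "HOL-Probability.Probability" "HOL-Library.Landau_Symbols"
begin

text \<open>Arms are indexed 0..K-1. A cost table c :: arm => pull index => real gives
  c i t = cost observed at the t-th pull (t >= 1) of arm i (for a fixed outcome).\<close>

definition rho_hat :: "real \<Rightarrow> (nat \<Rightarrow> nat \<Rightarrow> real) \<Rightarrow> nat \<Rightarrow> nat \<Rightarrow> real" where
  "rho_hat \<beta> c i n = (1 / \<beta>) * ln ((1 / real n) * (\<Sum>t = 1..n. exp (\<beta> * c i t)))"

definition cnt :: "nat list \<Rightarrow> nat \<Rightarrow> nat" where
  "cnt h i = length (filter (\<lambda>j. j = i) h)"

definition bonus :: "real \<Rightarrow> real \<Rightarrow> real \<Rightarrow> real \<Rightarrow> nat \<Rightarrow> nat \<Rightarrow> real" where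
  "bonus \<theta> \<xi> \<eta> \<alpha> t s = \<theta> powr (1 / \<xi>) * real t powr (\<alpha> / \<xi>) / real s powr (1 - \<eta>)"

text \<open>Arm chosen at timestep t = length h + 1, given the history h of previous pulls:
  the first K steps pull each arm once; afterwards the arm minimising the index
  (ties broken towards the smallest arm index).\<close>
definition next_arm :: "nat \<Rightarrow> real \<Rightarrow> real \<Rightarrow> real \<Rightarrow> real \<Rightarrow> real \<Rightarrow> (nat \<Rightarrow> nat \<Rightarrow> real)
    \<Rightarrow> nat list \<Rightarrow> nat" where
  "next_arm K \<beta> \<theta> \<xi> \<eta> \<alpha> c h =
     (if length h < K then length h
      else (let idx = (\<lambda>i. rho_hat \<beta> c i (cnt h i) - bonus \<theta> \<xi> \<eta> \<alpha> (length h + 1) (cnt h i))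
            in LEAST i. i < K \<and> (\<forall>j<K. idx i \<le> idx j)))"

primrec hist :: "nat \<Rightarrow> real \<Rightarrow> real \<Rightarrow> real \<Rightarrow> real \<Rightarrow> real \<Rightarrow> (nat \<Rightarrow> nat \<Rightarrow> real)
    \<Rightarrow> nat \<Rightarrow> nat list" where
  "hist K \<beta> \<theta> \<xi> \<eta> \<alpha> c 0 = []"
| "hist K \<beta> \<theta> \<xi> \<eta> \<alpha> c (Suc n) =
     hist K \<beta> \<theta> \<xi> \<eta> \<alpha> c n @ [next_arm K \<beta> \<theta> \<xi> \<eta> \<alpha> c (hist K \<beta> \<theta> \<xi> \<eta> \<alpha> c n)]"

definition T_pulls :: "nat \<Rightarrow> real \<Rightarrow> real \<Rightarrow> real \<Rightarrow> real \<Rightarrow> real \<Rightarrow> (nat \<Rightarrow> nat \<Rightarrow> real)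
    \<Rightarrow> nat \<Rightarrow> nat \<Rightarrow> nat" where
  "T_pulls K \<beta> \<theta> \<xi> \<eta> \<alpha> c i n = cnt (hist K \<beta> \<theta> \<xi> \<eta> \<alpha> c n) i"

definition rho_bar :: "nat \<Rightarrow> real \<Rightarrow> real \<Rightarrow> real \<Rightarrow> real \<Rightarrow> real \<Rightarrow> (nat \<Rightarrow> nat \<Rightarrow> real)
    \<Rightarrow> nat \<Rightarrow> real" where
  "rho_bar K \<beta> \<theta> \<xi> \<eta> \<alpha> c n =
     (1 / real n) * (\<Sum>i<K. real (T_pulls K \<beta> \<theta> \<xi> \<eta> \<alpha> c i n)
                      * rho_hat \<beta> c i (T_pulls K \<beta> \<theta> \<xi> \<eta> \<alpha> c i n))"

end

theory Submission
  imports Defs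
begin

text \<open>
  Outside an event of small probability the index policy pulls each suboptimal arm at most
  \<open>s0 \<approx> n powr \<eta>'\<close> times, where \<open>\<eta>' = \<alpha> / (\<xi> * (1 - \<eta>))\<close>: when a suboptimal arm gets
  its \<open>(s0 + 1)\<close>-st pull, the index comparison forces the best arm to be overestimated at some
  sample size, or that arm to be underestimated after \<open>s0\<close> pulls, beyond the confidence width;
  the concentration hypotheses bound the probability of all these events together by
  \<open>(n + K) / (s0 + 1) powr \<alpha>\<close>. Since \<open>k * rho_hat k\<close> moves by at most
  \<open>R + exp (2 * \<beta> * R) / \<beta>\<close> per sample, \<open>n * rho_bar n\<close> then stays within \<open>O(K * s0)\<close> of
  \<open>n * rho_hat istar n\<close>, so the tails of \<open>rho_bar\<close> are inherited from the best arm.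
  Summing these tails over the levels \<open>k * n powr \<eta>'\<close> bounds the bias.
\<close>

section \<open>Empirical entropic risk\<close>

lemma ln_ge_one_minus_inverse:
  fixes q :: real
  assumes "q > 0"
  shows "1 - 1 / q \<le> ln q"
  using ln_le_minus_one[of "1 / q"] assms by (simp add: ln_div)

lemma scaled_ln_running_mean_bounds:
  fixes m a s :: real
  assumes m: "m > 0" and a: "a > 0" and s: "s \<ge> 0"
  shows "-1 \<le> s * ln ((s * m + a) / (s + 1) / m)"
    and "s * ln ((s * m + a) / (s + 1) / m) \<le> a / m"
proof -
  define q where "q = (s * m + a) / (s + 1) / m"
  have q: "q > 0"
    unfolding q_def using assms by (simp add: add_nonneg_pos)
  have den: "s * m + a > 0"
    using assms by (simp add: add_nonneg_pos)
  have "1 / q = (s + 1) * m / (s * m + a)"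
    unfolding q_def using assms den by (simp add: field_simps)
  then have "s * (1 - 1 / q) = s - s * ((s + 1) * m) / (s * m + a)"
    by (simp add: right_diff_distrib)
  also have "\<dots> = s * (a - m) / (s * m + a)"
    using den by (simp add: field_simps)
  also have "\<dots> \<ge> -1"
  proof -
    have "0 \<le> a * s"
      using assms by simp
    then have "- (s * m + a) \<le> s * (a - m)"
      using a by (simp add: algebra_simps)
    then show ?thesis
      using den by (simp add: le_divide_eq)
  qed
  finally show "-1 \<le> s * ln q"
    using mult_left_mono[OF ln_ge_one_minus_inverse[OF q] s] by linarith
  have "s + 1 \<noteq> 0" "m \<noteq> 0"
    using assms by auto
  then have "q - 1 = (s * m + a - (s + 1) * m) / ((s + 1) * m)"
    unfolding q_def by (simp add: diff_divide_distrib)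
  then have "q - 1 = (a - m) / ((s + 1) * m)"
    by (simp add: algebra_simps)
  then have "s * (q - 1) = s * (a - m) / ((s + 1) * m)"
    by simp
  also have "\<dots> \<le> (s + 1) * a / ((s + 1) * m)"
  proof (rule divide_right_mono)
    have "0 \<le> s * m"
      using assms by simp
    then show "s * (a - m) \<le> (s + 1) * a"
      using a by (simp add: algebra_simps)
  qed (use assms in simp)
  also have "\<dots> = a / m"
    using s by simp
  finally show "s * ln q \<le> a / m"
    using mult_left_mono[OF ln_le_minus_one[OF q] s] by linarith
qed

definition mean_exp :: "real \<Rightarrow> (nat \<Rightarrow> nat \<Rightarrow> real) \<Rightarrow> nat \<Rightarrow> nat \<Rightarrow> real" where
  "mean_exp \<beta> c i n = (\<Sum>t = 1..n. exp (\<beta> * c i t)) / real n"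

lemma rho_hat_eq_ln_mean_exp: "rho_hat \<beta> c i n = ln (mean_exp \<beta> c i n) / \<beta>"
  by (simp add: rho_hat_def mean_exp_def)

lemma mean_exp_Suc:
  assumes "n \<ge> 1"
  shows "mean_exp \<beta> c i (Suc n) = (real n * mean_exp \<beta> c i n + exp (\<beta> * c i (Suc n))) / (real n + 1)"
  using assms by (simp add: mean_exp_def add.commute)

lemma mean_exp_bounds:
  assumes c: "\<And>t. 1 \<le> t \<Longrightarrow> \<bar>c i t\<bar> \<le> R" and \<beta>: "\<beta> > 0" and n: "n \<ge> 1"
  shows "exp (- (\<beta> * R)) \<le> mean_exp \<beta> c i n" and "mean_exp \<beta> c i n \<le> exp (\<beta> * R)"
proof -
  have "- (\<beta> * R) \<le> \<beta> * c i t \<and> \<beta> * c i t \<le> \<beta> * R" if "t \<in> {1..n}" for t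
  proof -
    have "\<bar>\<beta> * c i t\<bar> \<le> \<beta> * R"
      using c[of t] that \<beta> by (simp add: abs_mult)
    then show ?thesis
      unfolding abs_le_iff by linarith
  qed
  then have "real n * exp (- (\<beta> * R)) \<le> (\<Sum>t = 1..n. exp (\<beta> * c i t))"
    and "(\<Sum>t = 1..n. exp (\<beta> * c i t)) \<le> real n * exp (\<beta> * R)"
    using sum_mono[of "{1..n}" "\<lambda>_. exp (- (\<beta> * R))" "\<lambda>t. exp (\<beta> * c i t)"]
      sum_mono[of "{1..n}" "\<lambda>t. exp (\<beta> * c i t)" "\<lambda>_. exp (\<beta> * R)"] by auto
  then show "exp (- (\<beta> * R)) \<le> mean_exp \<beta> c i n" and "mean_exp \<beta> c i n \<le> exp (\<beta> * R)"
    using n by (simp_all add: mean_exp_def field_simps)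
qed

lemma mean_exp_pos:
  assumes "\<And>t. 1 \<le> t \<Longrightarrow> \<bar>c i t\<bar> \<le> R" and "\<beta> > 0" and "n \<ge> 1"
  shows "mean_exp \<beta> c i n > 0"
  using less_le_trans[OF exp_gt_zero mean_exp_bounds(1)[of c i R \<beta> n, OF assms]] .

lemma abs_ln_mean_exp_le:
  assumes "\<And>t. 1 \<le> t \<Longrightarrow> \<bar>c i t\<bar> \<le> R" and "\<beta> > 0" and "n \<ge> 1"
  shows "\<bar>ln (mean_exp \<beta> c i n)\<bar> \<le> \<beta> * R"
  using mean_exp_bounds[of c i R \<beta> n, OF assms] mean_exp_pos[of c i R \<beta> n, OF assms]
    ln_le_cancel_iff[OF exp_gt_zero, of "mean_exp \<beta> c i n" "- (\<beta> * R)"]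
    ln_le_cancel_iff[OF _ exp_gt_zero, of "mean_exp \<beta> c i n" "\<beta> * R"]
  by (simp add: abs_le_iff)

lemma rho_hat_abs_le:
  assumes c: "\<And>t. 1 \<le> t \<Longrightarrow> \<bar>c i t\<bar> \<le> R" and \<beta>: "\<beta> > 0" and n: "n \<ge> 1"
  shows "\<bar>rho_hat \<beta> c i n\<bar> \<le> R"
  using abs_ln_mean_exp_le[of c i R \<beta> n, OF assms] \<beta> by (simp add: rho_hat_eq_ln_mean_exp abs_divide field_simps)

lemma rho_hat_increment_abs_le:
  assumes c: "\<And>t. 1 \<le> t \<Longrightarrow> \<bar>c i t\<bar> \<le> R" and \<beta>: "\<beta> > 0"
  shows "\<bar>real (Suc s) * rho_hat \<beta> c i (Suc s) - real s * rho_hat \<beta> c i s\<bar>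
           \<le> R + exp (2 * \<beta> * R) / \<beta>"
proof (cases "s = 0")
  case True
  then show ?thesis
    using c[of 1] \<beta> by (simp add: rho_hat_def add_increasing2)
next
  case False
  let ?m = "mean_exp \<beta> c i"
  define a where "a = exp (\<beta> * c i (Suc s))"
  have m_pos: "?m s > 0" "?m (Suc s) > 0"
    using mean_exp_pos[of c i R \<beta>, OF c \<beta>] False by simp_all
  have "\<beta> * (real (Suc s) * rho_hat \<beta> c i (Suc s) - real s * rho_hat \<beta> c i s)
          = real (Suc s) * ln (?m (Suc s)) - real s * ln (?m s)"
    using \<beta> by (simp add: rho_hat_eq_ln_mean_exp field_simps)
  also have "\<dots> = ln (?m (Suc s)) + real s * ln (?m (Suc s) / ?m s)"
    using m_pos by (simp add: ln_div algebra_simps)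
  also have "?m (Suc s) / ?m s = (real s * ?m s + a) / (real s + 1) / ?m s"
    using False by (simp add: mean_exp_Suc a_def)
  finally have eq: "\<beta> * (real (Suc s) * rho_hat \<beta> c i (Suc s) - real s * rho_hat \<beta> c i s)
          = ln (?m (Suc s)) + real s * ln ((real s * ?m s + a) / (real s + 1) / ?m s)" .
  have "a \<le> exp (\<beta> * R)"
    unfolding a_def using c[of "Suc s"] \<beta> by (simp add: abs_le_iff)
  also have "\<dots> = exp (2 * \<beta> * R) * exp (- (\<beta> * R))"
    by (simp flip: exp_add)
  also have "\<dots> \<le> exp (2 * \<beta> * R) * ?m s"
    using mean_exp_bounds(1)[of c i R \<beta> s, OF c \<beta>] False by simp
  finally have "a / ?m s \<le> exp (2 * \<beta> * R)"
    using m_pos by (simp add: field_simps)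
  moreover have "a > 0"
    unfolding a_def by simp
  note scaled_ln_running_mean_bounds[OF m_pos(1) this of_nat_0_le_iff[of s]]
  moreover have "\<bar>ln (?m (Suc s))\<bar> \<le> \<beta> * R"
    using abs_ln_mean_exp_le[of c i R \<beta> "Suc s", OF c \<beta>] by simp
  moreover have "1 \<le> exp (2 * \<beta> * R)"
    using c[of 1] \<beta> by simp
  ultimately have "\<bar>\<beta> * (real (Suc s) * rho_hat \<beta> c i (Suc s) - real s * rho_hat \<beta> c i s)\<bar>
                     \<le> \<beta> * R + exp (2 * \<beta> * R)"
    unfolding eq abs_le_iff by (intro conjI; linarith)
  then have "\<beta> * \<bar>real (Suc s) * rho_hat \<beta> c i (Suc s) - real s * rho_hat \<beta> c i s\<bar>
               \<le> \<beta> * (R + exp (2 * \<beta> * R) / \<beta>)"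
    using \<beta> by (simp add: abs_mult distrib_left)
  then show ?thesis
    using \<beta> by (rule mult_left_le_imp_le)
qed

lemma rho_hat_scaled_lipschitz:
  assumes c: "\<And>t. 1 \<le> t \<Longrightarrow> \<bar>c i t\<bar> \<le> R" and \<beta>: "\<beta> > 0" and mn: "m \<le> n"
  shows "\<bar>real n * rho_hat \<beta> c i n - real m * rho_hat \<beta> c i m\<bar>
           \<le> (R + exp (2 * \<beta> * R) / \<beta>) * (real n - real m)"
  using mn
proof (induction n rule: dec_induct)
  case (step n)
  let ?F = "\<lambda>k. real k * rho_hat \<beta> c i k" and ?L = "R + exp (2 * \<beta> * R) / \<beta>"
  have "\<bar>?F (Suc n) - ?F m\<bar> \<le> \<bar>?F (Suc n) - ?F n\<bar> + \<bar>?F n - ?F m\<bar>"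
    by linarith
  also have "\<dots> \<le> ?L + ?L * (real n - real m)"
    using rho_hat_increment_abs_le[of c i R \<beta> n] c \<beta> step.IH by (intro add_mono) blast+
  also have "\<dots> = ?L * (real (Suc n) - real m)"
    by (simp only: of_nat_Suc) (simp add: distrib_left right_diff_distrib)
  finally show ?case .
qed simp

section \<open>The index policy\<close>

lemma mult_divide_powr_one_minus:
  fixes s w \<eta> :: real
  assumes "s > 0"
  shows "s * (w / s powr (1 - \<eta>)) = s powr \<eta> * w"
  using assms by (simp add: powr_diff field_simps)

lemma gap_le_bonus_imp_pulls_le:
  fixes D \<Delta> s t e \<eta> :: real
  assumes D: "D > 0" and \<Delta>: "\<Delta> > 0" and s: "s > 0" and \<eta>: "\<eta> < 1"
    and gap: "\<Delta> \<le> 2 * (D * t powr e / s powr (1 - \<eta>))"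
  shows "s \<le> (2 * D / \<Delta>) powr (1 / (1 - \<eta>)) * t powr (e / (1 - \<eta>))"
proof -
  have "s powr (1 - \<eta>) \<le> 2 * D / \<Delta> * t powr e"
    using gap s \<Delta> by (simp add: field_simps)
  then have "(s powr (1 - \<eta>)) powr (1 / (1 - \<eta>)) \<le> (2 * D / \<Delta> * t powr e) powr (1 / (1 - \<eta>))"
    using \<eta> by (intro powr_mono2) auto
  also have "(2 * D / \<Delta> * t powr e) powr (1 / (1 - \<eta>))
               = (2 * D / \<Delta>) powr (1 / (1 - \<eta>)) * t powr (e / (1 - \<eta>))"
    using D \<Delta> by (subst powr_mult) (auto simp: powr_powr)
  finally show ?thesis
    using s \<eta> by (simp add: powr_powr)
qed

lemma cnt_snoc: "cnt (h @ [a]) i = cnt h i + (if a = i then 1 else 0)"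
  by (simp add: cnt_def)

lemma cnt_le_length: "cnt h i \<le> length h"
  by (simp add: cnt_def)

context
  fixes K :: nat and \<beta> \<theta> \<xi> \<eta> \<alpha> :: real and c :: "nat \<Rightarrow> nat \<Rightarrow> real"
begin

abbreviation "pulls i n \<equiv> T_pulls K \<beta> \<theta> \<xi> \<eta> \<alpha> c i n"
abbreviation "arm_at n \<equiv> next_arm K \<beta> \<theta> \<xi> \<eta> \<alpha> c (hist K \<beta> \<theta> \<xi> \<eta> \<alpha> c n)"
abbreviation "ucb_index h i \<equiv> rho_hat \<beta> c i (cnt h i) - bonus \<theta> \<xi> \<eta> \<alpha> (length h + 1) (cnt h i)"

lemma length_hist: "length (hist K \<beta> \<theta> \<xi> \<eta> \<alpha> c n) = n"
  by (induction n) auto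

lemma next_arm_minimises_index:
  assumes "K > 0" "K \<le> length h"
  shows "next_arm K \<beta> \<theta> \<xi> \<eta> \<alpha> c h < K"
    and "\<And>j. j < K \<Longrightarrow> ucb_index h (next_arm K \<beta> \<theta> \<xi> \<eta> \<alpha> c h) \<le> ucb_index h j"
proof -
  let ?P = "\<lambda>i. i < K \<and> (\<forall>j<K. ucb_index h i \<le> ucb_index h j)"
  have fin: "finite (ucb_index h ` {..<K})" and ne: "ucb_index h ` {..<K} \<noteq> {}"
    using assms(1) by auto
  obtain i where "i < K" "ucb_index h i = Min (ucb_index h ` {..<K})"
    using Min_in[OF fin ne] by auto
  then have "?P i"
    using Min_le[OF fin] by auto
  moreover have "next_arm K \<beta> \<theta> \<xi> \<eta> \<alpha> c h = (LEAST i. ?P i)"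
    using assms(2) by (simp add: next_arm_def Let_def)
  ultimately have "?P (next_arm K \<beta> \<theta> \<xi> \<eta> \<alpha> c h)"
    using LeastI[of ?P i] by simp
  then show "next_arm K \<beta> \<theta> \<xi> \<eta> \<alpha> c h < K"
    and "\<And>j. j < K \<Longrightarrow> ucb_index h (next_arm K \<beta> \<theta> \<xi> \<eta> \<alpha> c h) \<le> ucb_index h j"
    by auto
qed

lemma next_arm_initial: "length h < K \<Longrightarrow> next_arm K \<beta> \<theta> \<xi> \<eta> \<alpha> c h = length h"
  by (simp add: next_arm_def)

lemma next_arm_less: "K > 0 \<Longrightarrow> next_arm K \<beta> \<theta> \<xi> \<eta> \<alpha> c h < K"
  using next_arm_minimises_index(1)[of h] next_arm_initial[of h] by (cases "length h < K") auto

lemma T_pulls_Suc: "pulls i (Suc n) = pulls i n + (if arm_at n = i then 1 else 0)"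
  by (simp add: T_pulls_def cnt_snoc)

lemma sum_T_pulls: "K > 0 \<Longrightarrow> (\<Sum>i<K. pulls i n) = n"
proof (induction n)
  case (Suc n)
  then have "(\<Sum>i<K. (if arm_at n = i then 1 else 0) :: nat) = 1"
    using next_arm_less by simp
  with Suc show ?case
    by (simp add: T_pulls_Suc sum.distrib)
qed (simp add: T_pulls_def cnt_def)

lemma T_pulls_le: "pulls i n \<le> n"
  using cnt_le_length length_hist unfolding T_pulls_def by metis

lemma T_pulls_initial: "n \<le> K \<Longrightarrow> pulls i n = (if i < n then 1 else 0)"
proof (induction n)
  case (Suc n)
  then have "arm_at n = n"
    using next_arm_initial length_hist by simp
  with Suc show ?case
    by (auto simp: T_pulls_Suc)
qed (simp add: T_pulls_def cnt_def)

lemma T_pulls_mono: "m \<le> n \<Longrightarrow> pulls i m \<le> pulls i n"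
  by (induction n rule: dec_induct) (auto simp: T_pulls_Suc)

lemma T_pulls_ge_one: "K \<le> n \<Longrightarrow> i < K \<Longrightarrow> 1 \<le> pulls i n"
  using T_pulls_mono[of K n i] T_pulls_initial[of K i] by simp

lemma T_pulls_passes: "s < pulls i n \<Longrightarrow> \<exists>t<n. pulls i t = s \<and> arm_at t = i"
proof (induction n)
  case (Suc n)
  show ?case
  proof (cases "s < pulls i n")
    case True
    then show ?thesis
      using Suc.IH less_SucI by blast
  next
    case False
    then have "pulls i n = s" "arm_at n = i"
      using Suc.prems by (auto simp: T_pulls_Suc split: if_splits)
    then show ?thesis
      by blast
  qed
qed (simp add: T_pulls_def cnt_def)

lemma scaled_rho_bar:
  assumes "K > 0"
  shows "real n * rho_bar K \<beta> \<theta> \<xi> \<eta> \<alpha> c n = (\<Sum>i<K. real (pulls i n) * rho_hat \<beta> c i (pulls i n))"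
proof (cases "n = 0")
  case True
  then show ?thesis
    by (simp add: T_pulls_def cnt_def)
qed (simp add: rho_bar_def)

lemma pulled_arm_deviation_or_few_pulls:
  fixes \<mu> :: "nat \<Rightarrow> real"
  assumes K: "K > 0" and t: "K \<le> t" and j: "j < K" and arm: "arm_at t = i"
  defines "w \<equiv> \<theta> powr (1 / \<xi>) * real (Suc t) powr (\<alpha> / \<xi>)"
  defines "s \<equiv> pulls i t" and "s' \<equiv> pulls j t"
  shows "real s' powr \<eta> * w < real s' * rho_hat \<beta> c j s' - real s' * \<mu> j
       \<or> real s * rho_hat \<beta> c i s - real s * \<mu> i < - (real s powr \<eta> * w)
       \<or> \<mu> i - \<mu> j \<le> 2 * (w / real s powr (1 - \<eta>))"
proof (rule ccontr)
  have i: "i < K"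
    using arm next_arm_less[OF K] by blast
  have s: "real s > 0" and s': "real s' > 0"
    unfolding s_def s'_def using T_pulls_ge_one[OF t] i j by (simp_all add: Suc_le_eq)
  have "ucb_index (hist K \<beta> \<theta> \<xi> \<eta> \<alpha> c t) i \<le> ucb_index (hist K \<beta> \<theta> \<xi> \<eta> \<alpha> c t) j"
    using next_arm_minimises_index(2)[OF K, of "hist K \<beta> \<theta> \<xi> \<eta> \<alpha> c t" j] t j arm
    by (simp add: length_hist)
  then have index: "rho_hat \<beta> c i s - w / real s powr (1 - \<eta>) \<le> rho_hat \<beta> c j s' - w / real s' powr (1 - \<eta>)"
    by (simp add: s_def s'_def w_def T_pulls_def bonus_def length_hist)
  assume "\<not> ?thesis"
  then have "real s' * (rho_hat \<beta> c j s' - \<mu> j) \<le> real s' * (w / real s' powr (1 - \<eta>))"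
    and "real s * (- (w / real s powr (1 - \<eta>))) \<le> real s * (rho_hat \<beta> c i s - \<mu> i)"
    and gap: "2 * (w / real s powr (1 - \<eta>)) < \<mu> i - \<mu> j"
    using mult_divide_powr_one_minus[OF s, of w \<eta>] mult_divide_powr_one_minus[OF s', of w \<eta>]
    by (auto simp: algebra_simps)
  then have "rho_hat \<beta> c j s' - \<mu> j \<le> w / real s' powr (1 - \<eta>)"
    and "- (w / real s powr (1 - \<eta>)) \<le> rho_hat \<beta> c i s - \<mu> i"
    using s s' by (simp_all only: mult_le_cancel_left_pos)
  with index gap show False
    by linarith
qed

lemma many_pulls_imp_deviation:
  fixes \<mu> :: "nat \<Rightarrow> real"
  assumes K: "K > 0" and j: "j < K" and gap: "\<mu> j < \<mu> i"
    and \<theta>: "\<theta> > 0" and \<xi>: "\<xi> > 0" and \<alpha>: "\<alpha> \<ge> 0" and \<eta>: "\<eta> < 1" and s0: "s0 \<ge> 1"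
    and many: "(2 * \<theta> powr (1 / \<xi>) / (\<mu> i - \<mu> j)) powr (1 / (1 - \<eta>)) * real n powr (\<alpha> / (\<xi> * (1 - \<eta>)))
                 < real s0"
    and pulled: "s0 < pulls i n"
  defines "w0 \<equiv> \<theta> powr (1 / \<xi>) * real (Suc s0) powr (\<alpha> / \<xi>)"
  shows "(\<exists>s\<in>{1..n}. real s powr \<eta> * w0 \<le> real s * rho_hat \<beta> c j s - real s * \<mu> j)
       \<or> real s0 * rho_hat \<beta> c i s0 - real s0 * \<mu> i \<le> - (real s0 powr \<eta> * w0)"
proof -
  obtain t where t: "t < n" "pulls i t = s0" "arm_at t = i"
    using T_pulls_passes[OF pulled] by blast
  have "K \<le> t"
  proof (rule ccontr)
    assume "\<not> K \<le> t"
    then have "arm_at t = t" "pulls i t = (if i < t then 1 else 0)"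
      using next_arm_initial length_hist T_pulls_initial[of t i] by simp_all
    with t s0 show False
      by simp
  qed
  define w where "w = \<theta> powr (1 / \<xi>) * real (Suc t) powr (\<alpha> / \<xi>)"
  have "s0 \<le> t"
    using T_pulls_le[of i t] t by simp
  then have w0_le: "w0 \<le> w"
    unfolding w0_def w_def using \<alpha> \<xi> by (intro mult_left_mono powr_mono2) auto
  define s' where "s' = pulls j t"
  have s': "s' \<in> {1..n}"
    unfolding s'_def using T_pulls_ge_one[OF \<open>K \<le> t\<close> j] T_pulls_le[of j t] t(1) by simp
  consider "real s' powr \<eta> * w < real s' * rho_hat \<beta> c j s' - real s' * \<mu> j"
    | "real s0 * rho_hat \<beta> c i s0 - real s0 * \<mu> i < - (real s0 powr \<eta> * w)"
    | "\<mu> i - \<mu> j \<le> 2 * (\<theta> powr (1 / \<xi>) * real (Suc t) powr (\<alpha> / \<xi>) / real s0 powr (1 - \<eta>))"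
    using pulled_arm_deviation_or_few_pulls[OF K \<open>K \<le> t\<close> j t(3), of \<mu>]
    unfolding s'_def w_def t(2) by blast
  then show ?thesis
  proof cases
    case 1
    moreover have "real s' powr \<eta> * w0 \<le> real s' powr \<eta> * w"
      using w0_le by (intro mult_left_mono) auto
    ultimately have "real s' powr \<eta> * w0 \<le> real s' * rho_hat \<beta> c j s' - real s' * \<mu> j"
      by linarith
    then show ?thesis
      using s' by blast
  next
    case 2
    moreover have "real s0 powr \<eta> * w0 \<le> real s0 powr \<eta> * w"
      using w0_le by (intro mult_left_mono) auto
    ultimately show ?thesis
      by linarith
  next
    case 3
    then have "real s0 \<le> (2 * \<theta> powr (1 / \<xi>) / (\<mu> i - \<mu> j)) powr (1 / (1 - \<eta>))
                            * real (Suc t) powr (\<alpha> / \<xi> / (1 - \<eta>))"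
      using gap \<theta> s0 \<eta> by (intro gap_le_bonus_imp_pulls_le) auto
    also have "\<dots> \<le> (2 * \<theta> powr (1 / \<xi>) / (\<mu> i - \<mu> j)) powr (1 / (1 - \<eta>))
                            * real n powr (\<alpha> / (\<xi> * (1 - \<eta>)))"
      unfolding divide_divide_eq_left using t(1) \<alpha> \<xi> \<eta>
      by (intro mult_left_mono powr_mono2) (auto simp flip: of_nat_Suc)
    finally show ?thesis
      using many by linarith
  qed
qed

lemma rho_bar_near_rho_hat_of_dominant_arm:
  assumes K: "K > 0" and j: "j < K" and c: "\<And>i t. 1 \<le> t \<Longrightarrow> \<bar>c i t\<bar> \<le> R" and \<beta>: "\<beta> > 0"
    and few: "\<And>i. i < K \<Longrightarrow> i \<noteq> j \<Longrightarrow> pulls i n \<le> s0"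
  shows "\<bar>real n * rho_bar K \<beta> \<theta> \<xi> \<eta> \<alpha> c n - real n * rho_hat \<beta> c j n\<bar>
           \<le> real K * real s0 * (2 * R + exp (2 * \<beta> * R) / \<beta>)"
proof -
  let ?I = "{..<K} - {j}" and ?L = "R + exp (2 * \<beta> * R) / \<beta>"
  let ?f = "\<lambda>i. real (pulls i n) * rho_hat \<beta> c i (pulls i n)"
  let ?S = "\<Sum>i\<in>?I. real (pulls i n)"
  have R: "R \<ge> 0"
    using c[of 1 0] by simp
  have split: "(\<Sum>i<K. g i) = g j + (\<Sum>i\<in>?I. g i)" for g :: "nat \<Rightarrow> real"
    using j by (subst sum.remove[of _ j]) auto
  have others: "real n - real (pulls j n) = ?S"
    using split[of "\<lambda>i. real (pulls i n)"] sum_T_pulls[OF K, of n] by (simp flip: of_nat_sum)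
  have "real n * rho_bar K \<beta> \<theta> \<xi> \<eta> \<alpha> c n - real n * rho_hat \<beta> c j n
          = (?f j - real n * rho_hat \<beta> c j n) + (\<Sum>i\<in>?I. ?f i)"
    using scaled_rho_bar[OF K] split[of ?f] by simp
  then have "\<bar>real n * rho_bar K \<beta> \<theta> \<xi> \<eta> \<alpha> c n - real n * rho_hat \<beta> c j n\<bar>
               \<le> \<bar>?f j - real n * rho_hat \<beta> c j n\<bar> + \<bar>\<Sum>i\<in>?I. ?f i\<bar>"
    by (simp only: abs_triangle_ineq)
  also have "\<dots> \<le> ?L * ?S + R * ?S"
  proof (rule add_mono)
    show "\<bar>?f j - real n * rho_hat \<beta> c j n\<bar> \<le> ?L * ?S"
      using rho_hat_scaled_lipschitz[of c j R \<beta> "pulls j n" n] c \<beta> T_pulls_le[of j n] others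
      by (simp add: abs_minus_commute)
    have "\<bar>?f i\<bar> \<le> R * real (pulls i n)" for i
      using rho_hat_abs_le[of c i R \<beta> "pulls i n"] c \<beta> R
      by (cases "pulls i n = 0") (auto simp: abs_mult mult.commute mult_left_mono)
    then show "\<bar>\<Sum>i\<in>?I. ?f i\<bar> \<le> R * ?S"
      by (simp add: sum_distrib_left order_trans[OF sum_abs sum_mono])
  qed
  also have "\<dots> = (?L + R) * ?S"
    by (simp add: distrib_right)
  also have "\<dots> \<le> (?L + R) * (real K * real s0)"
  proof (rule mult_left_mono)
    have "?S \<le> real (card ?I) * real s0"
      using sum_mono[of ?I "\<lambda>i. real (pulls i n)" "\<lambda>_. real s0"] few by simp
    also have "\<dots> \<le> real K * real s0"
      using card_Diff1_le[of "{..<K}" j] by (intro mult_right_mono) auto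
    finally show "?S \<le> real K * real s0" .
  qed (use R \<beta> in simp)
  also have "\<dots> = real K * real s0 * (2 * R + exp (2 * \<beta> * R) / \<beta>)"
    by (simp add: algebra_simps)
  finally show ?thesis .
qed

end

section \<open>Tails and moments\<close>

lemma le_by_count_of_levels_below:
  fixes y B :: real
  assumes B: "B > 0" and y: "0 \<le> y" and N: "y \<le> real N * B"
  shows "y \<le> B * (1 + real (card {k \<in> {1..N}. real k * B \<le> y}))"
proof -
  define m where "m = nat \<lfloor>y / B\<rfloor>"
  have "y / B \<ge> 0"
    using B y by simp
  then have m: "real m \<le> y / B" "y / B < real m + 1"
    unfolding m_def by linarith+
  have "y / B \<le> real N"
    using N B by (simp add: divide_le_eq)
  then have "m \<le> N"
    using m(1) by linarith
  have "{1..m} \<subseteq> {k \<in> {1..N}. real k * B \<le> y}"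
  proof
    fix k assume k: "k \<in> {1..m}"
    then have "real k * B \<le> real m * B"
      using B by (intro mult_right_mono) auto
    also have "\<dots> \<le> y"
      using m(1) B by (simp add: field_simps)
    finally show "k \<in> {k \<in> {1..N}. real k * B \<le> y}"
      using k \<open>m \<le> N\<close> by auto
  qed
  then have "m \<le> card {k \<in> {1..N}. real k * B \<le> y}"
    using card_mono[of "{k \<in> {1..N}. real k * B \<le> y}" "{1..m}"] by simp
  then have "B * (real m + 1) \<le> B * (1 + real (card {k \<in> {1..N}. real k * B \<le> y}))"
    using B by (intro mult_left_mono) auto
  moreover have "y < B * (real m + 1)"
    using m(2) B by (simp add: field_simps)
  ultimately show ?thesis
    by linarith
qed

lemma count_over_powr_le:
  fixes n k q z a e L :: real
  assumes n: "n \<ge> 1" and k: "k \<ge> 0" and z: "z \<ge> 1" and L: "L > 0" and a: "a \<ge> 1"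
    and e: "e * a \<ge> 1" and q: "n powr e * z / L \<le> q"
  shows "(n + k) / q powr a \<le> (1 + k) * L powr a / z powr (a - 1)"
proof -
  have "n * z powr (a - 1) \<le> n powr (e * a) * z powr a"
    using n z e by (intro mult_mono powr_mono) (auto simp: powr_mono[of 1 "e * a" n, simplified])
  also have "\<dots> = (n powr e * z / L) powr a * L powr a"
    using n z L by (simp add: powr_mult powr_divide powr_powr)
  also have "\<dots> \<le> q powr a * L powr a"
    using n z L a q by (intro mult_right_mono powr_mono2) auto
  finally have nq: "n * z powr (a - 1) / L powr a \<le> q powr a"
    using L by (simp add: field_simps)
  have pos: "n * z powr (a - 1) / L powr a > 0"
    using n z L by simp
  have "(n + k) / q powr a \<le> (n + k) / (n * z powr (a - 1) / L powr a)"
  proof (rule divide_left_mono)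
    show "0 < q powr a * (n * z powr (a - 1) / L powr a)"
      using nq pos by (intro mult_pos_pos) auto
  qed (use nq n k in auto)
  also have "\<dots> = (n + k) / n * L powr a / z powr (a - 1)"
    using n z L by (simp add: field_simps)
  also have "\<dots> \<le> (1 + k) * L powr a / z powr (a - 1)"
  proof -
    have "(n + k) / n \<le> 1 + k"
    proof -
      have "k * 1 \<le> k * n"
        using k n by (intro mult_left_mono) auto
      then show ?thesis
        using n by (simp add: divide_le_eq algebra_simps)
    qed
    then show ?thesis
      using L z by (intro divide_right_mono mult_right_mono) auto
  qed
  finally show ?thesis .
qed

lemma divide_powr_le_of_half_le:
  fixes \<theta> z z1 p q :: real
  assumes "z / 2 \<le> z1" "2 \<le> z" "0 \<le> \<theta>" "0 \<le> q" "p \<le> q"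
  shows "\<theta> / z1 powr q \<le> \<theta> * 2 powr q / z powr p"
proof -
  have "\<theta> / z1 powr q \<le> \<theta> / (z / 2) powr q"
    using assms by (intro divide_left_mono powr_mono2 mult_pos_pos) auto
  also have "\<dots> = \<theta> * 2 powr q / z powr q"
    using assms by (simp add: powr_divide)
  also have "\<dots> \<le> \<theta> * 2 powr q / z powr p"
    using assms by (intro divide_left_mono powr_mono) auto
  finally show ?thesis .
qed

context prob_space
begin

lemma prob_le_of_subset_Un:
  assumes "A \<in> events" "B \<in> events" "E \<in> events" "A \<subseteq> B \<union> E"
  shows "prob A \<le> prob B + prob E"
  using finite_measure_mono[of A "B \<union> E"] measure_Un_le[of B M E] assms by auto

lemma prob_le_powr_tail_extend:
  fixes C z0 p :: real
  assumes large: "\<And>z. z0 \<le> z \<Longrightarrow> prob (A z) \<le> C / z powr p" and p: "p \<ge> 0" and z: "1 \<le> z"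
  shows "prob (A z) \<le> max C (z0 powr p) / z powr p"
proof (cases "z0 \<le> z")
  case True
  then show ?thesis
    using large[OF True] divide_right_mono[OF max.cobounded1[of C "z0 powr p"] powr_ge_zero[of z p]]
    by linarith
next
  case False
  have "prob (A z) \<le> z powr p / z powr p"
    using z by simp
  also have "\<dots> \<le> max C (z0 powr p) / z powr p"
    using False z p by (intro divide_right_mono max.coboundedI2 powr_mono2) auto
  finally show ?thesis .
qed

lemma expectation_abs_le_of_tails:
  fixes Y :: "'a \<Rightarrow> real" and f :: "nat \<Rightarrow> real"
  assumes Y: "Y \<in> borel_measurable M" and bounded: "\<And>\<omega>. \<omega> \<in> space M \<Longrightarrow> \<bar>Y \<omega>\<bar> \<le> b"
    and B: "B > 0" and tail: "\<And>k. 1 \<le> k \<Longrightarrow> prob {\<omega> \<in> space M. real k * B \<le> \<bar>Y \<omega>\<bar>} \<le> f k"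
    and f: "summable f" "\<And>k. 0 \<le> f k"
  shows "expectation (\<lambda>\<omega>. \<bar>Y \<omega>\<bar>) \<le> B * (1 + suminf f)"
proof -
  define N where "N = nat \<lceil>b / B\<rceil>"
  define E where "E k = {\<omega> \<in> space M. real k * B \<le> \<bar>Y \<omega>\<bar>}" for k
  have E [measurable]: "E k \<in> events" for k
    unfolding E_def using Y by measurable
  have layers: "\<bar>Y \<omega>\<bar> \<le> B * (1 + (\<Sum>k\<in>{1..N}. indicator (E k) \<omega>))" if \<omega>: "\<omega> \<in> space M" for \<omega>
  proof -
    have "b / B \<le> real N"
      unfolding N_def by (rule real_nat_ceiling_ge)
    then have "\<bar>Y \<omega>\<bar> \<le> real N * B"
      using bounded[OF \<omega>] B by (simp add: divide_le_eq)
    then have "\<bar>Y \<omega>\<bar> \<le> B * (1 + real (card {k \<in> {1..N}. real k * B \<le> \<bar>Y \<omega>\<bar>}))"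
      using le_by_count_of_levels_below[OF B abs_ge_zero] by blast
    also have "real (card {k \<in> {1..N}. real k * B \<le> \<bar>Y \<omega>\<bar>}) = (\<Sum>k\<in>{1..N}. indicator (E k) \<omega>)"
      using \<omega> by (simp add: indicator_def E_def Int_def)
    finally show ?thesis .
  qed
  have ind: "integrable M (indicat_real (E k))" for k
    using E by (simp add: emeasure_finite less_top[symmetric])
  have int_Y: "integrable M (\<lambda>\<omega>. \<bar>Y \<omega>\<bar>)"
    using bounded Y by (intro integrable_const_bound[where B=b]) auto
  have "expectation (\<lambda>\<omega>. \<bar>Y \<omega>\<bar>) \<le> expectation (\<lambda>\<omega>. B * (1 + (\<Sum>k\<in>{1..N}. indicator (E k) \<omega>)))"
    using layers int_Y ind by (intro integral_mono) auto
  also have "\<dots> = B * (1 + (\<Sum>k\<in>{1..N}. prob (E k)))"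
    using ind by (simp add: Bochner_Integration.integral_add Bochner_Integration.integral_sum
        prob_space sets.Int_space_eq2)
  also have "\<dots> \<le> B * (1 + (\<Sum>k\<in>{1..N}. f k))"
    using tail B unfolding E_def by (intro mult_left_mono add_left_mono sum_mono) auto
  also have "\<dots> \<le> B * (1 + suminf f)"
    using sum_le_suminf[OF f(1), of "{1..N}"] f(2) B by (intro mult_left_mono add_left_mono) auto
  finally show ?thesis .
qed

end

section \<open>The stochastic bandit\<close>

locale risk_aware_bandit = prob_space M for M :: "'a measure" +
  fixes x :: "nat \<Rightarrow> nat \<Rightarrow> 'a \<Rightarrow> real"
    and K :: nat and R \<beta> \<theta> \<xi> \<eta> \<alpha> :: real and \<mu> :: "nat \<Rightarrow> real" and istar :: nat
  assumes x_measurable: "\<And>i t. x i t \<in> borel_measurable M"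
    and x_bounded: "\<And>i t \<omega>. \<omega> \<in> space M \<Longrightarrow> \<bar>x i t \<omega>\<bar> \<le> R"
    and \<beta>: "\<beta> > 0" and \<theta>: "\<theta> > 1" and \<xi>: "\<xi> > 1" and \<eta>_ge: "1/2 \<le> \<eta>" and \<eta>_less: "\<eta> < 1"
    and \<alpha>: "\<alpha> > 2" and \<alpha>_ge: "\<xi> * \<eta> * (1 - \<eta>) \<le> \<alpha>" and \<alpha>_less: "\<alpha> < \<xi> * (1 - \<eta>)"
    and conc_up: "\<And>i n z. i < K \<Longrightarrow> n \<ge> 1 \<Longrightarrow> z \<ge> 1 \<Longrightarrow>
       prob {\<omega> \<in> space M. real n * rho_hat \<beta> (\<lambda>j t. x j t \<omega>) i n - real n * \<mu> i
                             \<ge> real n powr \<eta> * z} \<le> \<theta> / z powr \<xi>"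
    and conc_low: "\<And>i n z. i < K \<Longrightarrow> n \<ge> 1 \<Longrightarrow> z \<ge> 1 \<Longrightarrow>
       prob {\<omega> \<in> space M. real n * rho_hat \<beta> (\<lambda>j t. x j t \<omega>) i n - real n * \<mu> i
                             \<le> - (real n powr \<eta> * z)} \<le> \<theta> / z powr \<xi>"
    and istar: "istar < K"
    and istar_unique: "\<And>i. i < K \<Longrightarrow> i \<noteq> istar \<Longrightarrow> \<mu> istar < \<mu> i"
begin

declare x_measurable [measurable]

abbreviation "costs \<omega> \<equiv> \<lambda>j t. x j t \<omega>"
abbreviation "avg_risk n \<omega> \<equiv> rho_bar K \<beta> \<theta> \<xi> \<eta> \<alpha> (costs \<omega>) n"
abbreviation "dev n \<omega> \<equiv> real n * avg_risk n \<omega> - real n * \<mu> istar"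
abbreviation "\<eta>' \<equiv> \<alpha> / (\<xi> * (1 - \<eta>))"

lemma K_pos: "K > 0"
  using istar by simp

lemma R_nonneg: "R \<ge> 0"
proof -
  obtain \<omega> where "\<omega> \<in> space M"
    using not_empty by blast
  then show ?thesis
    using x_bounded[of \<omega> 0 0] by simp
qed

lemma eta'_bounds: "\<eta> \<le> \<eta>'" "\<eta>' < 1" "1 \<le> \<eta>' * \<alpha>"
proof -
  have pos: "\<xi> * (1 - \<eta>) > 0"
    using \<xi> \<eta>_less by simp
  show "\<eta> \<le> \<eta>'" "\<eta>' < 1"
    using \<alpha>_ge \<alpha>_less pos by (simp_all add: field_simps)
  have "1 / 2 \<le> \<eta>'"
    using \<eta>_ge \<open>\<eta> \<le> \<eta>'\<close> by linarith
  then have "1 / 2 * 2 \<le> \<eta>' * \<alpha>"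
    using \<alpha> by (intro mult_mono) linarith+
  then show "1 \<le> \<eta>' * \<alpha>"
    by simp
qed

lemma rho_hat_measurable [measurable]: "(\<lambda>\<omega>. rho_hat \<beta> (costs \<omega>) i n) \<in> borel_measurable M"
  unfolding rho_hat_def by measurable

lemma next_arm_measurable:
  "(\<lambda>\<omega>. next_arm K \<beta> \<theta> \<xi> \<eta> \<alpha> (costs \<omega>) h) \<in> measurable M (count_space UNIV)"
proof (cases "length h < K")
  case False
  define idx where "idx \<omega> i = rho_hat \<beta> (costs \<omega>) i (cnt h i) - bonus \<theta> \<xi> \<eta> \<alpha> (length h + 1) (cnt h i)"
    for \<omega> i
  have [measurable]: "(\<lambda>\<omega>. idx \<omega> i) \<in> borel_measurable M" for i
    unfolding idx_def by measurable
  have "(\<lambda>\<omega>. LEAST i. i < K \<and> (\<forall>j<K. idx \<omega> i \<le> idx \<omega> j)) \<in> measurable M (count_space UNIV)"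
    by (rule measurable_Least) measurable
  moreover have "(\<lambda>\<omega>. next_arm K \<beta> \<theta> \<xi> \<eta> \<alpha> (costs \<omega>) h)
                   = (\<lambda>\<omega>. LEAST i. i < K \<and> (\<forall>j<K. idx \<omega> i \<le> idx \<omega> j))"
    using False by (simp add: next_arm_def Let_def idx_def)
  ultimately show ?thesis
    by simp
qed (simp add: next_arm_def)

lemma hist_measurable:
  "(\<lambda>\<omega>. hist K \<beta> \<theta> \<xi> \<eta> \<alpha> (costs \<omega>) n) \<in> measurable M (count_space UNIV)"
proof (induction n)
  case (Suc n)
  have "(\<lambda>\<omega>. h @ [next_arm K \<beta> \<theta> \<xi> \<eta> \<alpha> (costs \<omega>) h]) \<in> measurable M (count_space UNIV)" for h
    using measurable_compose[OF next_arm_measurable[of h], of "\<lambda>a. h @ [a]"] by simp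
  then show ?case
    using measurable_compose_countable[OF _ Suc.IH,
        of "\<lambda>h \<omega>. h @ [next_arm K \<beta> \<theta> \<xi> \<eta> \<alpha> (costs \<omega>) h]"] by simp
qed simp

lemma rho_bar_measurable [measurable]:
  "(\<lambda>\<omega>. rho_bar K \<beta> \<theta> \<xi> \<eta> \<alpha> (costs \<omega>) n) \<in> borel_measurable M"
proof -
  have "(\<lambda>\<omega>. (\<lambda>h \<omega>. 1 / real n * (\<Sum>i<K. real (cnt h i) * rho_hat \<beta> (costs \<omega>) i (cnt h i)))
            (hist K \<beta> \<theta> \<xi> \<eta> \<alpha> (costs \<omega>) n) \<omega>) \<in> borel_measurable M"
    by (rule measurable_compose_countable[OF _ hist_measurable]) measurable
  then show ?thesis
    by (simp add: rho_bar_def T_pulls_def)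
qed

lemma rho_bar_abs_le:
  assumes "\<omega> \<in> space M"
  shows "\<bar>avg_risk n \<omega>\<bar> \<le> R"
proof (cases "n = 0")
  case True
  then show ?thesis
    using R_nonneg by (simp add: rho_bar_def)
next
  case False
  let ?T = "\<lambda>i. T_pulls K \<beta> \<theta> \<xi> \<eta> \<alpha> (costs \<omega>) i n"
  have "\<bar>?T i * rho_hat \<beta> (costs \<omega>) i (?T i)\<bar> \<le> ?T i * R" for i
    using rho_hat_abs_le[of "costs \<omega>" i R \<beta> "?T i"] x_bounded[OF assms] \<beta>
    by (cases "?T i = 0") (auto simp: abs_mult)
  then have "\<bar>real n * avg_risk n \<omega>\<bar> \<le> (\<Sum>i<K. ?T i * R)"
    unfolding scaled_rho_bar[OF K_pos] by (rule order_trans[OF sum_abs sum_mono])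
  also have "\<dots> = real n * R"
    using sum_T_pulls[OF K_pos] by (simp flip: sum_distrib_right of_nat_sum)
  finally show ?thesis
    using False by (simp add: abs_mult)
qed

lemma dev_abs_le:
  assumes "\<omega> \<in> space M"
  shows "\<bar>dev n \<omega>\<bar> \<le> real n * (R + \<bar>\<mu> istar\<bar>)"
proof -
  have "\<bar>avg_risk n \<omega> - \<mu> istar\<bar> \<le> R + \<bar>\<mu> istar\<bar>"
    using rho_bar_abs_le[OF assms, of n] by linarith
  then show ?thesis
    by (simp flip: right_diff_distrib add: abs_mult mult_left_mono)
qed

lemma expectation_dev: "expectation (dev n) = real n * (expectation (avg_risk n) - \<mu> istar)"
proof -
  have "integrable M (avg_risk n)"
    using rho_bar_abs_le by (intro integrable_const_bound[where B=R]) auto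
  then show ?thesis
    by (simp add: prob_space right_diff_distrib)
qed

definition pull_scale :: real where
  "pull_scale = (\<Sum>i\<in>{..<K} - {istar}. (2 * \<theta> powr (1 / \<xi>) / (\<mu> i - \<mu> istar)) powr (1 / (1 - \<eta>)))"

text \<open>The width \<open>\<theta> powr (1 / \<xi>) * real (Suc s0) powr (\<alpha> / \<xi>)\<close> is the level at which the
  concentration bound \<open>\<theta> / z powr \<xi>\<close> equals \<open>1 / real (Suc s0) powr \<alpha>\<close>.\<close>

definition unconcentrated :: "nat \<Rightarrow> nat \<Rightarrow> 'a set" where
  "unconcentrated s0 n =
     (\<Union>s\<in>{1..n}. {\<omega> \<in> space M. real s powr \<eta> * (\<theta> powr (1 / \<xi>) * real (Suc s0) powr (\<alpha> / \<xi>))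
                                 \<le> real s * rho_hat \<beta> (costs \<omega>) istar s - real s * \<mu> istar})
   \<union> (\<Union>i<K. {\<omega> \<in> space M. real s0 * rho_hat \<beta> (costs \<omega>) i s0 - real s0 * \<mu> i
                                 \<le> - (real s0 powr \<eta> * (\<theta> powr (1 / \<xi>) * real (Suc s0) powr (\<alpha> / \<xi>)))})"

lemma pull_scale_nonneg: "pull_scale \<ge> 0"
  unfolding pull_scale_def by (intro sum_nonneg) auto

lemma unconcentrated_event: "unconcentrated s0 n \<in> events"
  unfolding unconcentrated_def by measurable

lemma prob_unconcentrated_le:
  assumes s0: "s0 \<ge> 1"
  shows "prob (unconcentrated s0 n) \<le> (real n + real K) / real (Suc s0) powr \<alpha>"
proof -
  define w0 where "w0 = \<theta> powr (1 / \<xi>) * real (Suc s0) powr (\<alpha> / \<xi>)"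
  define Up where "Up s = {\<omega> \<in> space M. real s powr \<eta> * w0 \<le> real s * rho_hat \<beta> (costs \<omega>) istar s - real s * \<mu> istar}"
    for s
  define Low where "Low i = {\<omega> \<in> space M. real s0 * rho_hat \<beta> (costs \<omega>) i s0 - real s0 * \<mu> i \<le> - (real s0 powr \<eta> * w0)}"
    for i
  have [measurable]: "Up s \<in> events" "Low i \<in> events" for s i
    unfolding Up_def Low_def by measurable
  have "1 * 1 \<le> w0"
    unfolding w0_def using \<theta> \<xi> \<alpha> by (intro mult_mono ge_one_powr_ge_zero) auto
  then have w0: "w0 \<ge> 1"
    by simp
  have single: "\<theta> / w0 powr \<xi> = 1 / real (Suc s0) powr \<alpha>"
    unfolding w0_def using \<theta> \<xi> by (simp add: powr_mult powr_powr)
  have "prob (unconcentrated s0 n) \<le> prob (\<Union>s\<in>{1..n}. Up s) + prob (\<Union>i<K. Low i)"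
    unfolding unconcentrated_def w0_def[symmetric] Up_def[symmetric] Low_def[symmetric]
    by (rule measure_Un_le) measurable
  also have "\<dots> \<le> (\<Sum>s\<in>{1..n}. prob (Up s)) + (\<Sum>i<K. prob (Low i))"
    by (intro add_mono finite_measure_subadditive_finite) auto
  also have "\<dots> \<le> (\<Sum>s\<in>{1..n}. 1 / real (Suc s0) powr \<alpha>) + (\<Sum>i<K. 1 / real (Suc s0) powr \<alpha>)"
    unfolding Up_def Low_def single[symmetric]
    using conc_up[OF istar _ w0] conc_low[OF _ s0 w0] by (intro add_mono sum_mono) auto
  also have "\<dots> = (real n + real K) / real (Suc s0) powr \<alpha>"
    by (simp add: add_divide_distrib)
  finally show ?thesis .
qed

lemma rho_bar_near_best_arm:
  assumes \<omega>: "\<omega> \<in> space M" "\<omega> \<notin> unconcentrated s0 n" and s0: "s0 \<ge> 1"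
    and many: "pull_scale * real n powr \<eta>' < real s0"
  shows "\<bar>real n * avg_risk n \<omega> - real n * rho_hat \<beta> (costs \<omega>) istar n\<bar>
           \<le> real K * real s0 * (2 * R + exp (2 * \<beta> * R) / \<beta>)"
proof (rule rho_bar_near_rho_hat_of_dominant_arm[OF K_pos istar])
  show "\<bar>costs \<omega> i t\<bar> \<le> R" for i t
    using \<omega> x_bounded by simp
  fix i assume i: "i < K" "i \<noteq> istar"
  have "(2 * \<theta> powr (1 / \<xi>) / (\<mu> i - \<mu> istar)) powr (1 / (1 - \<eta>)) * real n powr \<eta>'
          \<le> pull_scale * real n powr \<eta>'"
    unfolding pull_scale_def using i by (intro mult_right_mono member_le_sum) auto
  with many have many_i: "(2 * \<theta> powr (1 / \<xi>) / (\<mu> i - \<mu> istar)) powr (1 / (1 - \<eta>)) * real n powr \<eta>'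
                            < real s0"
    by linarith
  show "T_pulls K \<beta> \<theta> \<xi> \<eta> \<alpha> (costs \<omega>) i n \<le> s0"
  proof (rule ccontr)
    assume "\<not> ?thesis"
    then have "(\<exists>s\<in>{1..n}. real s powr \<eta> * (\<theta> powr (1 / \<xi>) * real (Suc s0) powr (\<alpha> / \<xi>))
                             \<le> real s * rho_hat \<beta> (costs \<omega>) istar s - real s * \<mu> istar)
             \<or> real s0 * rho_hat \<beta> (costs \<omega>) i s0 - real s0 * \<mu> i
                 \<le> - (real s0 powr \<eta> * (\<theta> powr (1 / \<xi>) * real (Suc s0) powr (\<alpha> / \<xi>)))"
      using \<theta> \<xi> \<alpha> \<eta>_less s0
      by (intro many_pulls_imp_deviation[OF K_pos istar istar_unique[OF i] _ _ _ _ _ many_i]) auto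
    then have "\<omega> \<in> unconcentrated s0 n"
      unfolding unconcentrated_def using \<omega>(1) i(1) by blast
    with \<omega>(2) show False
      by contradiction
  qed
qed (use \<beta> in simp)

lemma rho_bar_tails_at_level:
  assumes n: "n \<ge> 1" and s0: "s0 \<ge> 1" and many: "pull_scale * real n powr \<eta>' < real s0"
    and z1: "z1 \<ge> 1"
    and width: "real K * real s0 * (2 * R + exp (2 * \<beta> * R) / \<beta>) \<le> real n powr \<eta> * z1"
  shows "prob {\<omega> \<in> space M. 2 * (real n powr \<eta> * z1) \<le> dev n \<omega>}
           \<le> \<theta> / z1 powr \<xi> + (real n + real K) / real (Suc s0) powr \<alpha>"
    and "prob {\<omega> \<in> space M. dev n \<omega> \<le> - (2 * (real n powr \<eta> * z1))}
           \<le> \<theta> / z1 powr \<xi> + (real n + real K) / real (Suc s0) powr \<alpha>"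
proof -
  let ?X = "\<lambda>\<omega>. real n * rho_hat \<beta> (costs \<omega>) istar n - real n * \<mu> istar"
  have close: "\<bar>dev n \<omega> - ?X \<omega>\<bar> \<le> real n powr \<eta> * z1"
    if "\<omega> \<in> space M" "\<omega> \<notin> unconcentrated s0 n" for \<omega>
    using rho_bar_near_best_arm[OF that s0 many] width by simp
  note unconc = prob_unconcentrated_le[OF s0, of n]
  have "{\<omega> \<in> space M. 2 * (real n powr \<eta> * z1) \<le> dev n \<omega>}
          \<subseteq> {\<omega> \<in> space M. real n powr \<eta> * z1 \<le> ?X \<omega>} \<union> unconcentrated s0 n"
    using close by (force simp: abs_le_iff)
  then have "prob {\<omega> \<in> space M. 2 * (real n powr \<eta> * z1) \<le> dev n \<omega>}
          \<le> prob {\<omega> \<in> space M. real n powr \<eta> * z1 \<le> ?X \<omega>} + prob (unconcentrated s0 n)"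
    by (intro prob_le_of_subset_Un unconcentrated_event) measurable
  then show "prob {\<omega> \<in> space M. 2 * (real n powr \<eta> * z1) \<le> dev n \<omega>}
               \<le> \<theta> / z1 powr \<xi> + (real n + real K) / real (Suc s0) powr \<alpha>"
    using conc_up[OF istar n z1] unconc by simp
  have "{\<omega> \<in> space M. dev n \<omega> \<le> - (2 * (real n powr \<eta> * z1))}
          \<subseteq> {\<omega> \<in> space M. ?X \<omega> \<le> - (real n powr \<eta> * z1)} \<union> unconcentrated s0 n"
    using close by (force simp: abs_le_iff)
  then have "prob {\<omega> \<in> space M. dev n \<omega> \<le> - (2 * (real n powr \<eta> * z1))}
          \<le> prob {\<omega> \<in> space M. ?X \<omega> \<le> - (real n powr \<eta> * z1)} + prob (unconcentrated s0 n)"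
    by (intro prob_le_of_subset_Un unconcentrated_event) measurable
  then show "prob {\<omega> \<in> space M. dev n \<omega> \<le> - (2 * (real n powr \<eta> * z1))}
               \<le> \<theta> / z1 powr \<xi> + (real n + real K) / real (Suc s0) powr \<alpha>"
    using conc_low[OF istar n z1] unconc by simp
qed

definition pull_error :: real where
  "pull_error = 2 * R + exp (2 * \<beta> * R) / \<beta> + 1"

definition tail_threshold :: real where
  "tail_threshold = 2 * real K * pull_error * (pull_scale + 2)"

definition tail_const :: real where
  "tail_const = \<theta> * 2 powr \<xi> + (1 + real K) * (2 * real K * pull_error) powr \<alpha>"

lemma pull_error_ge_one: "pull_error \<ge> 1"
  unfolding pull_error_def using R_nonneg \<beta> by simp

lemma tail_const_gt_one: "tail_const > 1"
proof -
  have "1 * 1 < \<theta> * 2 powr \<xi>"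
    using \<theta> \<xi> by (intro mult_strict_mono ge_one_powr_ge_zero) auto
  moreover have "(1 + real K) * (2 * real K * pull_error) powr \<alpha> \<ge> 0"
    by simp
  ultimately show ?thesis
    unfolding tail_const_def by linarith
qed

text \<open>At deviation level \<open>real n powr \<eta>' * z\<close> one can afford about
  \<open>real n powr \<eta>' * z / (2 * real K * pull_error)\<close> pulls of suboptimal arms; for
  \<open>z \<ge> tail_threshold\<close> this exceeds the number of pulls they receive on the concentrated event.\<close>

lemma exploration_level:
  assumes n: "n \<ge> 1" and z: "tail_threshold \<le> z"
  obtains s0 z1 where "s0 \<ge> 1" "pull_scale * real n powr \<eta>' < real s0"
    and "z / 2 \<le> z1" "2 * (real n powr \<eta> * z1) = real n powr \<eta>' * z"
    and "real K * real s0 * (2 * R + exp (2 * \<beta> * R) / \<beta>) \<le> real n powr \<eta> * z1"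
    and "real n powr \<eta>' * z / (2 * real K * pull_error) \<le> real (Suc s0)"
proof -
  define KL where "KL = 2 * real K * pull_error"
  have "2 * (1 * 1) \<le> 2 * (real K * pull_error)"
    using K_pos pull_error_ge_one by (intro mult_left_mono mult_mono) auto
  then have KL2: "KL \<ge> 2"
    unfolding KL_def by simp
  have npow: "real n powr \<eta>' \<ge> 1"
    using n eta'_bounds(1) \<eta>_ge by (intro ge_one_powr_ge_zero) auto
  define a where "a = real n powr \<eta>' * (z / KL)"
  have "tail_threshold / KL = pull_scale + 2"
    unfolding tail_threshold_def KL_def using K_pos pull_error_ge_one by simp
  then have "real n powr \<eta>' * (pull_scale + 2) = real n powr \<eta>' * (tail_threshold / KL)"
    by simp
  also have "\<dots> \<le> a"
    unfolding a_def using z KL2 npow by (intro divide_right_mono mult_left_mono) auto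
  finally have a_ge: "pull_scale * real n powr \<eta>' + 2 * real n powr \<eta>' \<le> a"
    by (simp add: algebra_simps)
  have ps: "0 \<le> pull_scale * real n powr \<eta>'"
    using pull_scale_nonneg npow by simp
  define s0 where "s0 = nat \<lfloor>a\<rfloor>"
  have s0_a: "real s0 \<le> a" "a < real s0 + 1"
    unfolding s0_def using a_ge npow ps by linarith+
  define z1 where "z1 = real n powr \<eta>' / real n powr \<eta> * (z / 2)"
  have level: "2 * (real n powr \<eta> * z1) = real n powr \<eta>' * z"
    unfolding z1_def using n by simp
  have "0 \<le> KL * (pull_scale + 2)"
    using KL2 pull_scale_nonneg by simp
  then have "0 \<le> z"
    using z unfolding tail_threshold_def KL_def[symmetric] by linarith
  moreover have "1 \<le> real n powr \<eta>' / real n powr \<eta>"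
    using n eta'_bounds by (simp add: powr_mono)
  ultimately have "1 * (z / 2) \<le> z1"
    unfolding z1_def by (intro mult_right_mono) auto
  moreover have "real K * real s0 * (2 * R + exp (2 * \<beta> * R) / \<beta>) \<le> real K * a * pull_error"
    unfolding pull_error_def using s0_a R_nonneg \<beta> by (intro mult_mono) auto
  moreover have "real K * a * pull_error = real n powr \<eta> * z1"
    using level K_pos pull_error_ge_one unfolding a_def KL_def by (simp add: field_simps)
  ultimately show ?thesis
    using that[of s0 z1] a_ge npow ps s0_a level unfolding a_def KL_def by simp
qed

lemma rho_bar_tails_large:
  assumes n: "n \<ge> 1" and z: "tail_threshold \<le> z"
  shows "prob {\<omega> \<in> space M. dev n \<omega> \<ge> real n powr \<eta>' * z} \<le> tail_const / z powr (\<alpha> - 1)"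
    and "prob {\<omega> \<in> space M. dev n \<omega> \<le> - (real n powr \<eta>' * z)} \<le> tail_const / z powr (\<alpha> - 1)"
proof -
  obtain s0 z1 where s0: "s0 \<ge> 1" and many: "pull_scale * real n powr \<eta>' < real s0"
    and z1: "z / 2 \<le> z1" and level: "2 * (real n powr \<eta> * z1) = real n powr \<eta>' * z"
    and width: "real K * real s0 * (2 * R + exp (2 * \<beta> * R) / \<beta>) \<le> real n powr \<eta> * z1"
    and pulls: "real n powr \<eta>' * z / (2 * real K * pull_error) \<le> real (Suc s0)"
    using exploration_level[OF n z] by blast
  have z4: "z \<ge> 4"
  proof -
    have "2 * (1 * 1) * (0 + 2) \<le> tail_threshold"
      unfolding tail_threshold_def using K_pos pull_error_ge_one pull_scale_nonneg
      by (intro mult_mono) auto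
    with z show ?thesis
      by simp
  qed
  have "0 \<le> \<xi> * \<eta>"
    using \<xi> \<eta>_ge by simp
  then have "\<theta> / z1 powr \<xi> \<le> \<theta> * 2 powr \<xi> / z powr (\<alpha> - 1)"
    using z1 z4 \<theta> \<xi> \<alpha>_less by (intro divide_powr_le_of_half_le) (auto simp: algebra_simps)
  moreover have "(real n + real K) / real (Suc s0) powr \<alpha>
                   \<le> (1 + real K) * (2 * real K * pull_error) powr \<alpha> / z powr (\<alpha> - 1)"
    using n z4 K_pos pull_error_ge_one \<alpha> eta'_bounds(3) pulls
    by (intro count_over_powr_le[of "real n" "real K" z _ \<alpha> "\<eta>'"]) auto
  ultimately have total: "\<theta> / z1 powr \<xi> + (real n + real K) / real (Suc s0) powr \<alpha> \<le> tail_const / z powr (\<alpha> - 1)"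
    unfolding tail_const_def by (simp add: add_divide_distrib)
  show "prob {\<omega> \<in> space M. dev n \<omega> \<ge> real n powr \<eta>' * z} \<le> tail_const / z powr (\<alpha> - 1)"
    using rho_bar_tails_at_level(1)[OF n s0 many _ width] z1 z4 total unfolding level by simp
  show "prob {\<omega> \<in> space M. dev n \<omega> \<le> - (real n powr \<eta>' * z)} \<le> tail_const / z powr (\<alpha> - 1)"
    using rho_bar_tails_at_level(2)[OF n s0 many _ width] z1 z4 total unfolding level by simp
qed

lemma rho_bar_tails:
  "\<exists>\<theta>'>1. \<forall>n z. n \<ge> 1 \<longrightarrow> z \<ge> 1 \<longrightarrow>
     prob {\<omega> \<in> space M. dev n \<omega> \<ge> real n powr \<eta>' * z} \<le> \<theta>' / z powr (\<alpha> - 1)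
   \<and> prob {\<omega> \<in> space M. dev n \<omega> \<le> - (real n powr \<eta>' * z)} \<le> \<theta>' / z powr (\<alpha> - 1)"
proof (intro exI[of _ "max tail_const (tail_threshold powr (\<alpha> - 1))"] conjI allI impI)
  show "max tail_const (tail_threshold powr (\<alpha> - 1)) > 1"
    using tail_const_gt_one by simp
  fix n :: nat and z :: real
  assume "n \<ge> 1" "z \<ge> 1"
  then show "prob {\<omega> \<in> space M. dev n \<omega> \<ge> real n powr \<eta>' * z}
               \<le> max tail_const (tail_threshold powr (\<alpha> - 1)) / z powr (\<alpha> - 1)"
    and "prob {\<omega> \<in> space M. dev n \<omega> \<le> - (real n powr \<eta>' * z)}
               \<le> max tail_const (tail_threshold powr (\<alpha> - 1)) / z powr (\<alpha> - 1)"
    using \<alpha> rho_bar_tails_large[of n] by (auto intro!: prob_le_powr_tail_extend)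
qed

lemma expectation_rho_bar_error:
  "\<exists>C. \<forall>n\<ge>1. \<bar>\<mu> istar - expectation (avg_risk n)\<bar> \<le> C * real n powr (\<eta>' - 1)"
proof -
  obtain \<theta>' where "\<theta>' > 1" and tails: "\<And>n z. n \<ge> 1 \<Longrightarrow> z \<ge> 1 \<Longrightarrow>
      prob {\<omega> \<in> space M. dev n \<omega> \<ge> real n powr \<eta>' * z} \<le> \<theta>' / z powr (\<alpha> - 1)
    \<and> prob {\<omega> \<in> space M. dev n \<omega> \<le> - (real n powr \<eta>' * z)} \<le> \<theta>' / z powr (\<alpha> - 1)"
    using rho_bar_tails by blast
  define f where "f k = 2 * \<theta>' * real k powr (1 - \<alpha>)" for k :: nat
  have "summable (\<lambda>k::nat. real k powr (1 - \<alpha>))"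
    using \<alpha> by (simp add: summable_real_powr_iff)
  then have f: "summable f" "\<And>k. 0 \<le> f k"
    unfolding f_def using \<open>\<theta>' > 1\<close> by (auto intro: summable_mult)
  show ?thesis
  proof (intro exI[of _ "1 + suminf f"] allI impI)
    fix n :: nat assume n: "n \<ge> 1"
    have "1 \<le> real n powr \<eta>'"
      using n eta'_bounds(1) \<eta>_ge by (intro ge_one_powr_ge_zero) auto
    moreover have "prob {\<omega> \<in> space M. real k * real n powr \<eta>' \<le> \<bar>dev n \<omega>\<bar>} \<le> f k" if k: "1 \<le> k" for k
    proof -
      have "prob {\<omega> \<in> space M. real k * real n powr \<eta>' \<le> \<bar>dev n \<omega>\<bar>}
              \<le> prob {\<omega> \<in> space M. dev n \<omega> \<ge> real n powr \<eta>' * real k}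
                + prob {\<omega> \<in> space M. dev n \<omega> \<le> - (real n powr \<eta>' * real k)}"
        by (intro prob_le_of_subset_Un) (auto simp: abs_if mult.commute)
      also have "\<dots> \<le> \<theta>' / real k powr (\<alpha> - 1) + \<theta>' / real k powr (\<alpha> - 1)"
        using tails[OF n, of "real k"] k by (intro add_mono) auto
      also have "\<dots> = f k"
        unfolding f_def by (simp add: powr_minus_divide[of _ "\<alpha> - 1", simplified])
      finally show ?thesis .
    qed
    ultimately have "expectation (\<lambda>\<omega>. \<bar>dev n \<omega>\<bar>) \<le> real n powr \<eta>' * (1 + suminf f)"
      using n f dev_abs_le by (intro expectation_abs_le_of_tails) auto
    moreover have "\<bar>expectation (dev n)\<bar> \<le> expectation (\<lambda>\<omega>. \<bar>dev n \<omega>\<bar>)"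
      using integral_norm_bound[of M "dev n"] by simp
    ultimately have "real n * \<bar>\<mu> istar - expectation (avg_risk n)\<bar> \<le> real n powr \<eta>' * (1 + suminf f)"
      by (simp add: expectation_dev abs_mult abs_minus_commute)
    then show "\<bar>\<mu> istar - expectation (avg_risk n)\<bar> \<le> (1 + suminf f) * real n powr (\<eta>' - 1)"
      using n by (simp add: powr_diff field_simps)
  qed
qed

end

theorem theorem1:
  fixes M :: "'a measure" and x :: "nat \<Rightarrow> nat \<Rightarrow> 'a \<Rightarrow> real"
    and K :: nat and R \<beta> \<theta> \<xi> \<eta> \<alpha> :: real and mu :: "nat \<Rightarrow> real" and istar :: nat
  assumes "prob_space M"
    and meas: "\<And>i t. x i t \<in> borel_measurable M"
    and bounded: "\<And>i t \<omega>. \<omega> \<in> space M \<Longrightarrow> \<bar>x i t \<omega>\<bar> \<le> R"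
    and "\<beta> > 0"
    and "\<theta> > 1" and "\<xi> > 1" and "1/2 \<le> \<eta>" and "\<eta> < 1"
    and "\<alpha> > 2" and "\<xi> * \<eta> * (1 - \<eta>) \<le> \<alpha>" and "\<alpha> < \<xi> * (1 - \<eta>)"
    and lim: "\<And>i. i < K \<Longrightarrow>
       (\<lambda>n. prob_space.expectation M (\<lambda>\<omega>. rho_hat \<beta> (\<lambda>j t. x j t \<omega>) i n)) \<longlonglongrightarrow> mu i"
    and conc_up: "\<And>i n z. i < K \<Longrightarrow> n \<ge> 1 \<Longrightarrow> z \<ge> 1 \<Longrightarrow>
       measure M {\<omega> \<in> space M. real n * rho_hat \<beta> (\<lambda>j t. x j t \<omega>) i n - real n * mu i
                               \<ge> real n powr \<eta> * z} \<le> \<theta> / z powr \<xi>"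
    and conc_low: "\<And>i n z. i < K \<Longrightarrow> n \<ge> 1 \<Longrightarrow> z \<ge> 1 \<Longrightarrow>
       measure M {\<omega> \<in> space M. real n * rho_hat \<beta> (\<lambda>j t. x j t \<omega>) i n - real n * mu i
                               \<le> - (real n powr \<eta> * z)} \<le> \<theta> / z powr \<xi>"
    and "istar < K"
    and unique: "\<And>i. i < K \<Longrightarrow> i \<noteq> istar \<Longrightarrow> mu istar < mu i"
  shows "(\<lambda>n. \<bar>mu istar - prob_space.expectation M
                 (\<lambda>\<omega>. rho_bar K \<beta> \<theta> \<xi> \<eta> \<alpha> (\<lambda>j t. x j t \<omega>) n)\<bar>)
           \<in> O(\<lambda>n. exp (2 * \<beta> * R) * real n powr (\<alpha> / (\<xi> * (1 - \<eta>)) - 1))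
    \<and> (\<lambda>n. prob_space.expectation M (\<lambda>\<omega>. rho_bar K \<beta> \<theta> \<xi> \<eta> \<alpha> (\<lambda>j t. x j t \<omega>) n))
         \<longlonglongrightarrow> mu istar
    \<and> (\<exists>\<theta>'>1. \<forall>n z. n \<ge> 1 \<longrightarrow> z \<ge> 1 \<longrightarrow>
         measure M {\<omega> \<in> space M. real n * rho_bar K \<beta> \<theta> \<xi> \<eta> \<alpha> (\<lambda>j t. x j t \<omega>) n
              - real n * mu istar \<ge> real n powr (\<alpha> / (\<xi> * (1 - \<eta>))) * z}
           \<le> \<theta>' / z powr (\<alpha> - 1)
       \<and> measure M {\<omega> \<in> space M. real n * rho_bar K \<beta> \<theta> \<xi> \<eta> \<alpha> (\<lambda>j t. x j t \<omega>) n
              - real n * mu istar \<le> - (real n powr (\<alpha> / (\<xi> * (1 - \<eta>))) * z)}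
           \<le> \<theta>' / z powr (\<alpha> - 1))"
proof -
  interpret risk_aware_bandit M x K R \<beta> \<theta> \<xi> \<eta> \<alpha> mu istar
    by (intro risk_aware_bandit.intro risk_aware_bandit_axioms.intro) (fact assms)+
  obtain C where C: "\<And>n. n \<ge> 1 \<Longrightarrow> \<bar>mu istar - expectation (avg_risk n)\<bar>
                                 \<le> C * real n powr (\<eta>' - 1)"
    using expectation_rho_bar_error by blast
  then have bound: "\<forall>\<^sub>F n in sequentially.
      \<bar>mu istar - expectation (avg_risk n)\<bar> \<le> C * real n powr (\<eta>' - 1)"
    by (intro eventually_sequentiallyI[of 1]) auto
  then have "(\<lambda>n. \<bar>mu istar - expectation (avg_risk n)\<bar>)
               \<in> O(\<lambda>n. exp (2 * \<beta> * R) * real n powr (\<eta>' - 1))"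
    by (auto intro!: bigoI[of _ C] elim!: eventually_mono)
  moreover have "(\<lambda>n. C * real n powr (\<eta>' - 1)) \<longlonglongrightarrow> 0"
    using eta'_bounds(2) by (intro tendsto_mult_right_zero tendsto_neg_powr filterlim_real_sequentially) auto
  then have "(\<lambda>n. expectation (avg_risk n) - mu istar) \<longlonglongrightarrow> 0"
    by (rule Lim_null_comparison[rotated]) (use bound in \<open>auto simp: abs_minus_commute elim!: eventually_mono\<close>)
  then have "(\<lambda>n. expectation (avg_risk n)) \<longlonglongrightarrow> mu istar"
    by (rule LIM_zero_cancel)
  ultimately show ?thesis
    using rho_bar_tails by blast
qed

end
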